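(* Let $A$ be a $p\times p$ positive-semidefinite matrix. Assume $\{\lambda_{\max}(\Sigma_{i,A})\}^2/\mathrm{tr}(\Sigma_{i,A}^2)\to0$ as $p\to\infty$ for $i=1,2$, and $\limsup_{m\to\infty}\{\Delta(A)\}^2/K_1(A)<\infty$. Then $K(A)/K_1(A)=1+o(1)$ as $m\to\infty$.
   Context: Two populations on $\mathbb{R}^p$ have mean vectors $\mu_1,\mu_2$ and positive-definite covariance matrices $\Sigma_1,\Sigma_2$; sample sizes $n_1,n_2\ge4$. $\mu_A=A^{1/2}(\mu_1-\mu_2)$, $\Sigma_{i,A}=A^{1/2}\Sigma_iA^{1/2}$, $\Delta(A)=\|\mu_A\|^2$, $K_1(A)=2\sum_{i=1}^2\mathrm{tr}(\Sigma_{i,A}^2)/\{n_i(n_i-1)\}+4\mathrm{tr}(\Sigma_{1,A}\Sigma_{2,A})/(n_1n_2)$, $K_2(A)=4\sum_{i=1}^2\mu_A^T\Sigma_{i,A}\mu_A/n_i$, $K(A)=K_1(A)+K_2(A)$; $\lambda_{\max}(B)$ is the largest eigenvalue of $B$. Quantities may depend on $p,n_1,n_2$; $m=\min\{p,\min(n_1,n_2)\}$. *)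

theory Defs
  imports "Jordan_Normal_Form.Spectral_Radius" "HOL-Library.Extended_Real" "HOL-Library.Liminf_Limsup"
begin

definition psd_mat :: "nat \<Rightarrow> real mat \<Rightarrow> bool" where
  "psd_mat p B \<longleftrightarrow> B \<in> carrier_mat p p \<and> transpose_mat B = B \<and>
     (\<forall>v \<in> carrier_vec p. v \<bullet> (B *\<^sub>v v) \<ge> 0)"

definition pd_mat :: "nat \<Rightarrow> real mat \<Rightarrow> bool" where
  "pd_mat p B \<longleftrightarrow> B \<in> carrier_mat p p \<and> transpose_mat B = B \<and>
     (\<forall>v \<in> carrier_vec p. v \<noteq> 0\<^sub>v p \<longrightarrow> v \<bullet> (B *\<^sub>v v) > 0)"

definition mat_sqrt :: "real mat \<Rightarrow> real mat" where
  "mat_sqrt A = (SOME B. psd_mat (dim_row A) B \<and> B * B = A)"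

definition mat_trace :: "real mat \<Rightarrow> real" where
  "mat_trace B = (\<Sum>i<dim_row B. B $$ (i, i))"

definition lambda_max :: "real mat \<Rightarrow> real" where
  "lambda_max B = Max (spectrum B)"

definition SigA :: "real mat \<Rightarrow> real mat \<Rightarrow> real mat" where
  "SigA A S = mat_sqrt A * S * mat_sqrt A"

definition muA :: "real mat \<Rightarrow> real vec \<Rightarrow> real vec \<Rightarrow> real vec" where
  "muA A mu1 mu2 = mat_sqrt A *\<^sub>v (mu1 - mu2)"

definition Delta :: "real mat \<Rightarrow> real vec \<Rightarrow> real vec \<Rightarrow> real" where
  "Delta A mu1 mu2 = muA A mu1 mu2 \<bullet> muA A mu1 mu2"

definition K1 :: "real mat \<Rightarrow> real mat \<Rightarrow> real mat \<Rightarrow> nat \<Rightarrow> nat \<Rightarrow> real" where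
  "K1 A S1 S2 n1 n2 =
     2 * (mat_trace (SigA A S1 * SigA A S1) / (real n1 * (real n1 - 1))
        + mat_trace (SigA A S2 * SigA A S2) / (real n2 * (real n2 - 1)))
     + 4 * mat_trace (SigA A S1 * SigA A S2) / (real n1 * real n2)"

definition K2 :: "real mat \<Rightarrow> real mat \<Rightarrow> real mat \<Rightarrow> real vec \<Rightarrow> real vec \<Rightarrow> nat \<Rightarrow> nat \<Rightarrow> real" where
  "K2 A S1 S2 mu1 mu2 n1 n2 =
     4 * (muA A mu1 mu2 \<bullet> (SigA A S1 *\<^sub>v muA A mu1 mu2) / real n1
        + muA A mu1 mu2 \<bullet> (SigA A S2 *\<^sub>v muA A mu1 mu2) / real n2)"

definition KK :: "real mat \<Rightarrow> real mat \<Rightarrow> real mat \<Rightarrow> real vec \<Rightarrow> real vec \<Rightarrow> nat \<Rightarrow> nat \<Rightarrow> real" where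
  "KK A S1 S2 mu1 mu2 n1 n2 = K1 A S1 S2 n1 n2 + K2 A S1 S2 mu1 mu2 n1 n2"

end

theory Submission
  imports Defs
begin

text \<open>Since K = K1 + K2, it suffices that K2/K1 tends to 0. The Rayleigh bound
  mu_A' Sigma_{i,A} mu_A <= lambda_max(Sigma_{i,A}) Delta(A), together with
  K1 >= 2 tr(Sigma_{i,A}^2)/n_i^2 (all three trace terms of K1 are nonnegative), gives
  (K2/K1)^2 <= 16 (lambda_1^2/tr(Sigma_{1,A}^2) + lambda_2^2/tr(Sigma_{2,A}^2)) Delta^2/K1,
  a vanishing factor times an eventually bounded one. The matrix facts behind this (a psd square
  root exists, tr(PQ) >= 0 for psd P and Q, the Rayleigh bound) rest on the spectral theorem for
  real symmetric matrices, which follows by deflation with Householder reflections.\<close>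

section \<open>Spectral theorem for real symmetric matrices\<close>

lemma index_mult_mat_sum:
  fixes X Y :: "'a::comm_ring_1 mat"
  assumes "X \<in> carrier_mat r n" "Y \<in> carrier_mat n c" "i < r" "j < c"
  shows "(X * Y) $$ (i, j) = (\<Sum>k<n. X $$ (i, k) * Y $$ (k, j))"
  using assms by (simp add: scalar_prod_def row_def col_def atLeast0LessThan)

lemma scalar_prod_self_pos:
  fixes v :: "real vec"
  assumes "v \<in> carrier_vec n" "v \<noteq> 0\<^sub>v n"
  shows "0 < v \<bullet> v"
  using conjugate_square_greater_0_vec[OF assms(1)] assms(2) by simp

lemma sym_real_mat_eigenvalue_real:
  fixes M :: "real mat" and v :: "nat \<Rightarrow> complex"
  assumes sym: "\<And>i j. i < n \<Longrightarrow> j < n \<Longrightarrow> M $$ (j, i) = M $$ (i, j)"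
    and eig: "\<And>i. i < n \<Longrightarrow> (\<Sum>j<n. of_real (M $$ (i, j)) * v j) = \<mu> * v i"
    and nz: "i0 < n" "v i0 \<noteq> 0"
  shows "Im \<mu> = 0"
proof -
  define s where "s = (\<Sum>i<n. \<Sum>j<n. cnj (v i) * of_real (M $$ (i, j)) * v j)"
  define r where "r = (\<Sum>i<n. (cmod (v i))\<^sup>2)"
  have "(\<Sum>j<n. cnj (v i) * of_real (M $$ (i, j)) * v j) = \<mu> * (v i * cnj (v i))"
    if "i < n" for i
  proof -
    have "(\<Sum>j<n. cnj (v i) * of_real (M $$ (i, j)) * v j)
        = cnj (v i) * (\<Sum>j<n. of_real (M $$ (i, j)) * v j)"
      by (simp add: sum_distrib_left mult.assoc)
    thus ?thesis using eig[OF that] by (simp add: mult_ac)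
  qed
  hence "s = (\<Sum>i<n. \<mu> * (v i * cnj (v i)))"
    unfolding s_def by (intro sum.cong) auto
  also have "\<dots> = \<mu> * of_real r"
    unfolding r_def of_real_sum sum_distrib_left
    by (intro sum.cong refl arg_cong[where f = "(*) \<mu>"]) (rule complex_norm_square[symmetric])
  finally have s_eq: "s = \<mu> * of_real r" .
  have "cnj s = (\<Sum>i<n. \<Sum>j<n. v i * of_real (M $$ (i, j)) * cnj (v j))"
    unfolding s_def by simp
  also have "\<dots> = (\<Sum>j<n. \<Sum>i<n. v i * of_real (M $$ (i, j)) * cnj (v j))"
    by (rule sum.swap)
  also have "\<dots> = s"
    unfolding s_def by (intro sum.cong refl) (simp add: sym mult_ac)
  finally have "Im s = 0" by (simp add: complex_eq_iff)
  moreover have "0 < r"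
  proof -
    have "(cmod (v i0))\<^sup>2 \<le> r" unfolding r_def by (rule member_le_sum) (use nz in auto)
    moreover have "0 < (cmod (v i0))\<^sup>2" using nz by simp
    ultimately show ?thesis by linarith
  qed
  ultimately show ?thesis using s_eq by simp
qed

text \<open>The real and imaginary parts of a complex eigenvector for a real eigenvalue are real
  eigenvectors or zero, and not both vanish.\<close>
lemma sym_real_mat_eigenvector:
  fixes M :: "real mat"
  assumes M: "M \<in> carrier_mat n n" and sym: "transpose_mat M = M" and n: "0 < n"
  obtains l v where "v \<in> carrier_vec n" "v \<noteq> 0\<^sub>v n" "M *\<^sub>v v = l \<cdot>\<^sub>v v"
proof -
  define Mc where "Mc = map_mat complex_of_real M"
  have Mc: "Mc \<in> carrier_mat n n" using M unfolding Mc_def by auto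
  from spectrum_non_empty[OF Mc n] obtain \<mu> where "eigenvalue Mc \<mu>"
    unfolding spectrum_def by auto
  then obtain v where v: "v \<in> carrier_vec n" "v \<noteq> 0\<^sub>v n" "Mc *\<^sub>v v = \<mu> \<cdot>\<^sub>v v"
    unfolding eigenvalue_def eigenvector_def using Mc by auto
  have eig: "(\<Sum>j<n. complex_of_real (M $$ (i, j)) * v $ j) = \<mu> * v $ i" if "i < n" for i
  proof -
    have "(Mc *\<^sub>v v) $ i = (\<mu> \<cdot>\<^sub>v v) $ i" using v(3) by simp
    then show ?thesis using that Mc v(1) M
      by (auto simp: Mc_def scalar_prod_def row_def atLeast0LessThan)
  qed
  obtain i0 where i0: "i0 < n" "v $ i0 \<noteq> 0"
    using v(1,2) by (metis carrier_vecD eq_vecI index_zero_vec(1,2))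
  have sym': "M $$ (j, i) = M $$ (i, j)" if "i < n" "j < n" for i j
    using sym M that by (metis carrier_matD index_transpose_mat(1))
  have Im\<mu>: "Im \<mu> = 0"
    by (rule sym_real_mat_eigenvalue_real[of n M "\<lambda>j. v $ j", OF sym' eig i0]) auto
  have real_eig: "M *\<^sub>v vec n f = Re \<mu> \<cdot>\<^sub>v vec n f"
    if "\<And>i. i < n \<Longrightarrow> (\<Sum>j<n. M $$ (i, j) * f j) = Re \<mu> * f i" for f
    using that M by (intro eq_vecI) (auto simp: scalar_prod_def row_def atLeast0LessThan)
  show thesis
  proof (cases "Re (v $ i0) = 0")
    case True
    hence "vec n (\<lambda>i. Im (v $ i)) \<noteq> 0\<^sub>v n"
      using i0 complex_eq_iff by (metis index_vec index_zero_vec(1) zero_complex.simps)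
    moreover have "M *\<^sub>v vec n (\<lambda>i. Im (v $ i)) = Re \<mu> \<cdot>\<^sub>v vec n (\<lambda>i. Im (v $ i))"
      using arg_cong[OF eig, of _ Im] Im\<mu> by (intro real_eig) (simp add: Im_sum)
    ultimately show thesis by (intro that) auto
  next
    case False
    hence "vec n (\<lambda>i. Re (v $ i)) \<noteq> 0\<^sub>v n" using i0(1)
      by (metis index_vec index_zero_vec(1))
    moreover have "M *\<^sub>v vec n (\<lambda>i. Re (v $ i)) = Re \<mu> \<cdot>\<^sub>v vec n (\<lambda>i. Re (v $ i))"
      using arg_cong[OF eig, of _ Re] Im\<mu> by (intro real_eig) (simp add: Re_sum)
    ultimately show thesis by (intro that) auto
  qed
qed

definition householder_mat :: "nat \<Rightarrow> real vec \<Rightarrow> real mat" where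
  "householder_mat n w =
     mat n n (\<lambda>(i, j). (if i = j then 1 else 0) - 2 / (w \<bullet> w) * (w $ i * w $ j))"

lemma householder_mat_carrier: "householder_mat n w \<in> carrier_mat n n"
  unfolding householder_mat_def by auto

lemma householder_mat_sym: "transpose_mat (householder_mat n w) = householder_mat n w"
  unfolding householder_mat_def by (intro eq_matI) (simp_all add: mult.commute eq_commute)

lemma householder_mat_involution:
  assumes w: "w \<in> carrier_vec n" and ww: "w \<bullet> w \<noteq> 0"
  shows "householder_mat n w * householder_mat n w = 1\<^sub>m n"
proof (rule eq_matI)
  fix i j assume "i < dim_row (1\<^sub>m n)" "j < dim_col (1\<^sub>m n)"
  hence ij: "i < n" "j < n" by auto
  define a where "a = 2 / (w \<bullet> w)"
  have ww_sum: "w \<bullet> w = (\<Sum>k<n. w $ k * w $ k)"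
    using w by (simp add: scalar_prod_def atLeast0LessThan)
  have "(householder_mat n w * householder_mat n w) $$ (i, j)
      = (\<Sum>k<n. ((if i = k then 1 else 0) - a * (w $ i * w $ k))
                * ((if k = j then 1 else 0) - a * (w $ k * w $ j)))"
    unfolding index_mult_mat_sum[OF householder_mat_carrier householder_mat_carrier ij]
    using ij by (simp add: householder_mat_def a_def)
  also have "\<dots> = (\<Sum>k<n. (if i = k then (if k = j then 1 else 0) else 0)
        - (if i = k then a * (w $ k * w $ j) else 0) - (if k = j then a * (w $ i * w $ k) else 0)
        + a\<^sup>2 * (w $ i * w $ j) * (w $ k * w $ k))"
    by (intro sum.cong refl) (auto simp: algebra_simps power2_eq_square)
  also have "\<dots> = (if i = j then 1 else 0) - 2 * a * (w $ i * w $ j)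
        + a\<^sup>2 * (w $ i * w $ j) * (w \<bullet> w)"
    using ij by (simp add: sum.distrib sum_subtractf ww_sum sum_distrib_left)
  also have "\<dots> = 1\<^sub>m n $$ (i, j)"
    using ij ww by (simp add: a_def power2_eq_square)
  finally show "(householder_mat n w * householder_mat n w) $$ (i, j) = 1\<^sub>m n $$ (i, j)" .
qed (auto simp: householder_mat_def)

text \<open>The reflection across the hyperplane orthogonal to \<open>u - e\<^sub>0\<close> swaps the unit vectors
  \<open>u\<close> and \<open>e\<^sub>0\<close>.\<close>
lemma householder_mat_col_0:
  assumes u: "u \<in> carrier_vec n" and uu: "u \<bullet> u = 1" and n: "0 < n"
    and ww: "(u - unit_vec n 0) \<bullet> (u - unit_vec n 0) \<noteq> 0"
  shows "col (householder_mat n (u - unit_vec n 0)) 0 = u"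
proof -
  define w where "w = u - unit_vec n 0"
  have w: "w \<in> carrier_vec n" unfolding w_def using u by auto
  have "w \<bullet> w = u \<bullet> u - 2 * (u $ 0) + 1"
    using u n unfolding w_def
    by (simp add: minus_scalar_prod_distrib[of _ n] scalar_prod_minus_distrib[of _ n]
        comm_scalar_prod[of u n "unit_vec n 0"])
  hence w0: "2 / (w \<bullet> w) * w $ 0 = -1"
    using uu ww u n by (simp add: w_def field_simps)
  have "householder_mat n w $$ (i, 0) = u $ i" if i: "i < n" for i
  proof -
    have "householder_mat n w $$ (i, 0) = (if i = 0 then 1 else 0) - 2 / (w \<bullet> w) * w $ 0 * w $ i"
      using i n by (simp add: householder_mat_def mult_ac)
    also have "\<dots> = u $ i" using w0 i u by (simp add: w_def)
    finally show ?thesis .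
  qed
  thus ?thesis using u n unfolding w_def[symmetric]
    by (intro eq_vecI) (auto simp: householder_mat_def)
qed

lemma reflection_to_first_basis_vector:
  fixes u :: "real vec"
  assumes u: "u \<in> carrier_vec n" and uu: "u \<bullet> u = 1" and n: "0 < n"
  obtains H where "H \<in> carrier_mat n n" "transpose_mat H = H" "H * H = 1\<^sub>m n" "col H 0 = u"
proof (cases "(u - unit_vec n 0) \<bullet> (u - unit_vec n 0) = 0")
  case True
  hence "u - unit_vec n 0 = 0\<^sub>v n"
    using scalar_prod_self_pos[of "u - unit_vec n 0" n] u by fastforce
  have "u = unit_vec n 0"
  proof (rule eq_vecI)
    fix i assume "i < dim_vec (unit_vec n 0)"
    thus "u $ i = unit_vec n 0 $ i"
      using arg_cong[OF \<open>u - unit_vec n 0 = 0\<^sub>v n\<close>, of "\<lambda>x. x $ i"] u by simp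
  qed (use u in auto)
  thus thesis using n by (intro that[of "1\<^sub>m n"]) auto
next
  case False
  show thesis
    by (rule that[OF householder_mat_carrier householder_mat_sym
          householder_mat_involution[OF _ False] householder_mat_col_0[OF u uu n False]])
      (use u in auto)
qed

lemma sym_mat_first_col_block:
  fixes B :: "real mat"
  assumes B: "B \<in> carrier_mat (Suc m) (Suc m)" and sym: "transpose_mat B = B"
    and col0: "col B 0 = l \<cdot>\<^sub>v unit_vec (Suc m) 0"
  shows "B = four_block_mat (mat_diag 1 (\<lambda>_. l)) (0\<^sub>m 1 m) (0\<^sub>m m 1)
               (mat m m (\<lambda>(i, j). B $$ (Suc i, Suc j)))" (is "B = ?F")
proof -
  have c: "B $$ (i, 0) = (if i = 0 then l else 0)" if "i < Suc m" for i
    using arg_cong[OF col0, of "\<lambda>x. x $ i"] that B by auto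
  have r: "B $$ (0, j) = (if j = 0 then l else 0)" if "j < Suc m" for j
    using c[OF that] sym B that by (metis carrier_matD index_transpose_mat(1) zero_less_Suc)
  show ?thesis
  proof (rule eq_matI)
    fix i j assume "i < dim_row ?F" "j < dim_col ?F"
    hence "i < Suc m" "j < Suc m" by (auto simp: mat_diag_def)
    thus "B $$ (i, j) = ?F $$ (i, j)"
      using c r by (cases i; cases j) (auto simp: mat_diag_def)
  qed (use B in \<open>auto simp: mat_diag_def\<close>)
qed

text \<open>Conjugating by a reflection that maps an eigenvector to \<open>e\<^sub>0\<close> splits off a \<open>1 \<times> 1\<close>
  block.\<close>
lemma sym_mat_deflation:
  fixes M :: "real mat"
  assumes M: "M \<in> carrier_mat (Suc m) (Suc m)" and sym: "transpose_mat M = M"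
  obtains H l B where "H \<in> carrier_mat (Suc m) (Suc m)" "transpose_mat H = H"
    "H * H = 1\<^sub>m (Suc m)" "B \<in> carrier_mat m m" "transpose_mat B = B"
    "H * M * H = four_block_mat (mat_diag 1 (\<lambda>_. l)) (0\<^sub>m 1 m) (0\<^sub>m m 1) B"
proof -
  let ?n = "Suc m"
  obtain l v where v: "v \<in> carrier_vec ?n" "v \<noteq> 0\<^sub>v ?n" "M *\<^sub>v v = l \<cdot>\<^sub>v v"
    using sym_real_mat_eigenvector[OF M sym] by blast
  define u where "u = (1 / sqrt (v \<bullet> v)) \<cdot>\<^sub>v v"
  have vv: "0 < v \<bullet> v" using scalar_prod_self_pos v by blast
  have u: "u \<in> carrier_vec ?n" unfolding u_def using v by auto
  have uu: "u \<bullet> u = 1" unfolding u_def using v vv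
    by (simp add: smult_scalar_prod_distrib scalar_prod_smult_distrib[of v ?n]
        power2_eq_square[symmetric])
  have Mu: "M *\<^sub>v u = l \<cdot>\<^sub>v u" unfolding u_def using v M
    by (simp add: mult_mat_vec smult_smult_assoc mult.commute)
  obtain H where H: "H \<in> carrier_mat ?n ?n" "transpose_mat H = H" "H * H = 1\<^sub>m ?n" "col H 0 = u"
    using reflection_to_first_basis_vector[OF u uu] by blast
  define B where "B = H * M * H"
  have B: "B \<in> carrier_mat ?n ?n" unfolding B_def using H M by auto
  have symB: "transpose_mat B = B" unfolding B_def
    using H M sym by (simp add: transpose_mult[of _ ?n ?n _ ?n] assoc_mult_mat[of _ ?n ?n _ ?n _ ?n])
  have Hu: "H *\<^sub>v u = unit_vec ?n 0"
    using col_mult2[OF H(1) H(1), of 0] H by simp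
  have "col B 0 = (H * M) *\<^sub>v col H 0"
    unfolding B_def using H M by (intro col_mult2[of _ ?n ?n]) auto
  also have "\<dots> = H *\<^sub>v (M *\<^sub>v u)"
    using H M u by (simp add: assoc_mult_mat_vec[of _ ?n ?n])
  also have "\<dots> = l \<cdot>\<^sub>v unit_vec ?n 0" using Mu H u Hu by (simp add: mult_mat_vec)
  finally have "col B 0 = l \<cdot>\<^sub>v unit_vec ?n 0" .
  note block = sym_mat_first_col_block[OF B symB this]
  have symB': "transpose_mat (mat m m (\<lambda>(i, j). B $$ (Suc i, Suc j)))
      = mat m m (\<lambda>(i, j). B $$ (Suc i, Suc j))"
    using symB B by (intro eq_matI) (auto, metis carrier_matD index_transpose_mat(1) Suc_mono)
  show thesis
    using that[OF H(1-3) _ symB'] block unfolding B_def by auto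
qed

lemma block_diag_orthogonal_extension:
  fixes B W :: "real mat"
  assumes W: "W \<in> carrier_mat m m" "transpose_mat W * W = 1\<^sub>m m" "B * W = W * mat_diag m e"
    and B: "B \<in> carrier_mat m m"
  defines "V \<equiv> four_block_mat (1\<^sub>m 1) (0\<^sub>m 1 m) (0\<^sub>m m 1) W"
  shows "transpose_mat V * V = 1\<^sub>m (Suc m)"
    and "four_block_mat (mat_diag 1 (\<lambda>_. l)) (0\<^sub>m 1 m) (0\<^sub>m m 1) B * V
         = V * mat_diag (Suc m) (\<lambda>i. if i = 0 then l else e (i - 1))"
proof -
  have VT: "transpose_mat V = four_block_mat (1\<^sub>m 1) (0\<^sub>m 1 m) (0\<^sub>m m 1) (transpose_mat W)"
    unfolding V_def using W by (subst transpose_four_block_mat) auto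
  show "transpose_mat V * V = 1\<^sub>m (Suc m)"
    unfolding VT unfolding V_def using W by (subst mult_four_block_mat) auto
  have diag: "mat_diag (Suc m) (\<lambda>i. if i = 0 then l else e (i - 1))
      = four_block_mat (mat_diag 1 (\<lambda>_. l)) (0\<^sub>m 1 m) (0\<^sub>m m 1) (mat_diag m e)"
    by (intro eq_matI) (auto simp: mat_diag_def)
  note block_simps = right_mult_one_mat[OF mat_diag_dim] left_mult_one_mat[OF mat_diag_dim]
    right_mult_zero_mat[OF mat_diag_dim] left_mult_zero_mat[OF mat_diag_dim]
  have "four_block_mat (mat_diag 1 (\<lambda>_. l)) (0\<^sub>m 1 m) (0\<^sub>m m 1) B * V
      = four_block_mat (mat_diag 1 (\<lambda>_. l)) (0\<^sub>m 1 m) (0\<^sub>m m 1) (B * W)"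
    unfolding V_def using B W
    by (subst mult_four_block_mat[of _ 1 1 _ m _ m]) (auto simp: block_simps)
  also have "\<dots> = V * mat_diag (Suc m) (\<lambda>i. if i = 0 then l else e (i - 1))"
    unfolding W(3) V_def diag using W
    by (subst mult_four_block_mat[of _ 1 1 _ m _ m]) (auto simp: block_simps)
  finally show "four_block_mat (mat_diag 1 (\<lambda>_. l)) (0\<^sub>m 1 m) (0\<^sub>m m 1) B * V
         = V * mat_diag (Suc m) (\<lambda>i. if i = 0 then l else e (i - 1))" .
qed

theorem sym_real_mat_diagonalizable:
  fixes M :: "real mat"
  assumes "M \<in> carrier_mat n n" "transpose_mat M = M"
  shows "\<exists>U d. U \<in> carrier_mat n n \<and> transpose_mat U * U = 1\<^sub>m n \<and> M * U = U * mat_diag n d"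
  using assms
proof (induction n arbitrary: M)
  case 0
  show ?case by (intro exI[of _ "1\<^sub>m 0"] exI[of _ "\<lambda>_. 0"]) (use 0 in \<open>auto simp: mat_diag_def intro!: eq_matI\<close>)
next
  case (Suc m)
  let ?n = "Suc m"
  have M: "M \<in> carrier_mat ?n ?n" using Suc.prems by auto
  obtain H l B where H: "H \<in> carrier_mat ?n ?n" "transpose_mat H = H" "H * H = 1\<^sub>m ?n"
    and B: "B \<in> carrier_mat m m" "transpose_mat B = B"
    and HMH: "H * M * H = four_block_mat (mat_diag 1 (\<lambda>_. l)) (0\<^sub>m 1 m) (0\<^sub>m m 1) B"
    using sym_mat_deflation[OF Suc.prems] by blast
  obtain W e where W: "W \<in> carrier_mat m m" "transpose_mat W * W = 1\<^sub>m m"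
    "B * W = W * mat_diag m e"
    using Suc.IH[OF B] by blast
  define V where "V = four_block_mat (1\<^sub>m 1) (0\<^sub>m 1 m) (0\<^sub>m m 1) W"
  define d where "d i = (if i = 0 then l else e (i - 1))" for i
  have V: "V \<in> carrier_mat ?n ?n" unfolding V_def using W by auto
  note VV = block_diag_orthogonal_extension(1)[OF W B(1), folded V_def]
  have HMHV: "(H * M * H) * V = V * mat_diag ?n d"
    unfolding HMH d_def V_def by (rule block_diag_orthogonal_extension(2)[OF W B(1)])
  define U where "U = H * V"
  have U: "U \<in> carrier_mat ?n ?n" unfolding U_def using H V by auto
  have HHX: "H * (H * X) = X" if "X \<in> carrier_mat ?n ?n" for X
    using H that by (simp add: assoc_mult_mat[of _ ?n ?n _ ?n _ ?n, symmetric])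
  have "transpose_mat U * U = transpose_mat V * (H * (H * V))"
    unfolding U_def using H V by (simp add: transpose_mult[of _ ?n ?n _ ?n] assoc_mult_mat[of _ ?n ?n _ ?n _ ?n])
  also have "\<dots> = 1\<^sub>m ?n" using HHX[OF V] VV by simp
  finally have UU: "transpose_mat U * U = 1\<^sub>m ?n" .
  have "M * U = H * ((H * M * H) * V)"
    unfolding U_def using H M V HHX[of "M * (H * V)"]
    by (simp add: assoc_mult_mat[of _ ?n ?n _ ?n _ ?n])
  also have "\<dots> = U * mat_diag ?n d"
    unfolding HMHV U_def using H V by (simp add: assoc_mult_mat[of _ ?n ?n _ ?n _ ?n])
  finally show ?case using U UU by blast
qed

lemma sym_real_mat_spectral_decomposition:
  fixes M :: "real mat"
  assumes M: "M \<in> carrier_mat n n" and sym: "transpose_mat M = M"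
  obtains U d where "U \<in> carrier_mat n n" "transpose_mat U * U = 1\<^sub>m n" "U * transpose_mat U = 1\<^sub>m n"
    "M = U * mat_diag n d * transpose_mat U" "\<And>i. i < n \<Longrightarrow> eigenvalue M (d i)"
proof -
  obtain U d where U: "U \<in> carrier_mat n n" "transpose_mat U * U = 1\<^sub>m n" "M * U = U * mat_diag n d"
    using sym_real_mat_diagonalizable[OF M sym] by blast
  have UU': "U * transpose_mat U = 1\<^sub>m n"
    using mat_mult_left_right_inverse[of "transpose_mat U" n U] U by auto
  have "M = M * (U * transpose_mat U)" using M UU' by simp
  also have "\<dots> = M * U * transpose_mat U"
    by (rule assoc_mult_mat[OF M U(1), symmetric]) (use U in simp)
  finally have decomp: "M = U * mat_diag n d * transpose_mat U" unfolding U(3) .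
  have "eigenvalue M (d i)" if i: "i < n" for i
  proof -
    have "col U i \<bullet> col U i = 1"
      using U(1) i arg_cong[OF U(2), of "\<lambda>X. X $$ (i, i)"] by (simp add: row_transpose)
    hence "col U i \<noteq> 0\<^sub>v n" by auto
    moreover have "M *\<^sub>v col U i = d i \<cdot>\<^sub>v col U i"
    proof -
      have "M *\<^sub>v col U i = col (U * mat_diag n d) i"
        using U M i by (simp flip: col_mult2[OF M U(1) i])
      also have "\<dots> = d i \<cdot>\<^sub>v col U i"
        using U i by (intro eq_vecI) (auto simp: mat_diag_mult_right)
      finally show ?thesis .
    qed
    ultimately show ?thesis
      using U M unfolding eigenvalue_def eigenvector_def by (intro exI[of _ "col U i"]) auto
  qed
  thus thesis using that U UU' decomp by blast
qed

lemma quadratic_form_diag_conj: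
  fixes U :: "real mat"
  assumes U: "U \<in> carrier_mat n n" and x: "x \<in> carrier_vec n"
  shows "x \<bullet> ((U * mat_diag n d * transpose_mat U) *\<^sub>v x)
     = (\<Sum>i<n. d i * ((transpose_mat U *\<^sub>v x) $ i)\<^sup>2)"
proof -
  define y where "y = transpose_mat U *\<^sub>v x"
  have y: "y \<in> carrier_vec n" unfolding y_def using U x by auto
  have Dy: "mat_diag n d *\<^sub>v y = vec n (\<lambda>i. d i * y $ i)"
    using y by (intro eq_vecI) (auto simp: mat_diag_def scalar_prod_def sum.remove)
  have "x \<bullet> ((U * mat_diag n d * transpose_mat U) *\<^sub>v x) = x \<bullet> (U *\<^sub>v (mat_diag n d *\<^sub>v y))"
    unfolding y_def using U x by (simp add: assoc_mult_mat_vec[of _ n n _ n])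
  also have "\<dots> = y \<bullet> (mat_diag n d *\<^sub>v y)"
    using transpose_vec_mult_scalar[OF U mult_mat_vec_carrier[OF mat_diag_dim y] x]
    by (simp add: y_def)
  also have "\<dots> = (\<Sum>i<n. d i * (y $ i)\<^sup>2)"
    using y by (simp add: Dy scalar_prod_def atLeast0LessThan power2_eq_square mult_ac)
  finally show ?thesis unfolding y_def .
qed

lemma rayleigh_le_lambda_max:
  fixes M :: "real mat"
  assumes M: "M \<in> carrier_mat n n" and sym: "transpose_mat M = M" and x: "x \<in> carrier_vec n"
  shows "x \<bullet> (M *\<^sub>v x) \<le> lambda_max M * (x \<bullet> x)"
proof -
  obtain U d where U: "U \<in> carrier_mat n n" "U * transpose_mat U = 1\<^sub>m n"
    "M = U * mat_diag n d * transpose_mat U" "\<And>i. i < n \<Longrightarrow> eigenvalue M (d i)"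
    using sym_real_mat_spectral_decomposition[OF M sym] by metis
  have "d i \<le> lambda_max M" if "i < n" for i
    unfolding lambda_max_def using U(4)[OF that] card_finite_spectrum(1)[OF M]
    by (intro Max_ge) (auto simp: spectrum_def)
  hence "x \<bullet> (M *\<^sub>v x) \<le> (\<Sum>i<n. lambda_max M * ((transpose_mat U *\<^sub>v x) $ i)\<^sup>2)"
    unfolding U(3) quadratic_form_diag_conj[OF U(1) x] by (intro sum_mono mult_right_mono) auto
  also have "\<dots> = lambda_max M * (x \<bullet> ((U * mat_diag n (\<lambda>_. 1) * transpose_mat U) *\<^sub>v x))"
    unfolding quadratic_form_diag_conj[OF U(1) x] by (simp add: sum_distrib_left)
  also have "\<dots> = lambda_max M * (x \<bullet> x)" using U x by simp
  finally show ?thesis .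
qed

section \<open>Positive-semidefinite matrices\<close>

lemma psd_mat_sqrt_exists:
  assumes "psd_mat n M"
  shows "\<exists>B. psd_mat n B \<and> B * B = M"
proof -
  have M: "M \<in> carrier_mat n n" and sym: "transpose_mat M = M"
    and pos: "\<And>v. v \<in> carrier_vec n \<Longrightarrow> 0 \<le> v \<bullet> (M *\<^sub>v v)"
    using assms unfolding psd_mat_def by auto
  obtain U d where U: "U \<in> carrier_mat n n" "transpose_mat U * U = 1\<^sub>m n"
    "M = U * mat_diag n d * transpose_mat U" "\<And>i. i < n \<Longrightarrow> eigenvalue M (d i)"
    using sym_real_mat_spectral_decomposition[OF M sym] by metis
  have d_nonneg: "0 \<le> d i" if i: "i < n" for i
  proof -
    obtain v where v: "v \<in> carrier_vec n" "v \<noteq> 0\<^sub>v n" "M *\<^sub>v v = d i \<cdot>\<^sub>v v"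
      using U(4)[OF i] M unfolding eigenvalue_def eigenvector_def by auto
    have "0 \<le> v \<bullet> (M *\<^sub>v v)" using pos[OF v(1)] .
    also have "\<dots> = d i * (v \<bullet> v)" using v by (simp add: scalar_prod_smult_right)
    finally show ?thesis using scalar_prod_self_pos[OF v(1,2)] by (simp add: zero_le_mult_iff)
  qed
  define D where "D = mat_diag n (\<lambda>i. sqrt (d i))"
  define B where "B = U * D * transpose_mat U"
  have D: "D \<in> carrier_mat n n" "transpose_mat D = D"
    unfolding D_def by (auto simp: mat_diag_def intro!: eq_matI)
  have B: "B \<in> carrier_mat n n" unfolding B_def using U D by auto
  have "transpose_mat B = B"
    unfolding B_def using U D
    by (simp add: transpose_mult[of _ n n _ n] assoc_mult_mat[of _ n n _ n _ n])
  moreover have "B * B = M"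
  proof -
    have UUX: "transpose_mat U * (U * X) = X" if "X \<in> carrier_mat n n" for X
      using U that by (simp add: assoc_mult_mat[of _ n n _ n _ n, symmetric])
    have "B * B = U * (D * (transpose_mat U * (U * (D * transpose_mat U))))"
      unfolding B_def using U D by (simp add: assoc_mult_mat[of _ n n _ n _ n])
    also have "\<dots> = U * (D * D) * transpose_mat U"
      using UUX[of "D * transpose_mat U"] U D by (simp add: assoc_mult_mat[of _ n n _ n _ n])
    also have "D * D = mat_diag n d"
      unfolding D_def mat_diag_diag by (intro eq_matI) (auto simp: mat_diag_def d_nonneg)
    finally show ?thesis using U(3) by simp
  qed
  moreover have "0 \<le> v \<bullet> (B *\<^sub>v v)" if "v \<in> carrier_vec n" for v
    unfolding B_def D_def quadratic_form_diag_conj[OF U(1) that]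
    using d_nonneg by (intro sum_nonneg) auto
  ultimately show ?thesis using B unfolding psd_mat_def by blast
qed

lemma psd_mat_sqrt:
  assumes "psd_mat n A"
  shows "psd_mat n (mat_sqrt A)"
proof -
  have "dim_row A = n" using assms unfolding psd_mat_def by auto
  with someI_ex[OF psd_mat_sqrt_exists[OF assms]] show ?thesis unfolding mat_sqrt_def by simp
qed

lemma pd_imp_psd:
  assumes "pd_mat n S"
  shows "psd_mat n S"
proof -
  have S: "S \<in> carrier_mat n n" "transpose_mat S = S"
    and pos: "\<And>v. v \<in> carrier_vec n \<Longrightarrow> v \<noteq> 0\<^sub>v n \<Longrightarrow> 0 < v \<bullet> (S *\<^sub>v v)"
    using assms unfolding pd_mat_def by auto
  have "0 \<le> v \<bullet> (S *\<^sub>v v)" if "v \<in> carrier_vec n" for v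
    using pos[OF that] S by (cases "v = 0\<^sub>v n") (auto simp: less_imp_le)
  with S show ?thesis unfolding psd_mat_def by blast
qed

lemma psd_mat_congruence:
  assumes B: "B \<in> carrier_mat n n" "transpose_mat B = B" and S: "psd_mat n S"
  shows "psd_mat n (B * S * B)"
proof -
  have Sc: "S \<in> carrier_mat n n" and symS: "transpose_mat S = S"
    and Spos: "\<And>v. v \<in> carrier_vec n \<Longrightarrow> 0 \<le> v \<bullet> (S *\<^sub>v v)"
    using S unfolding psd_mat_def by auto
  have "transpose_mat (B * S * B) = B * S * B"
    using B Sc symS by (simp add: transpose_mult[of _ n n _ n] assoc_mult_mat[of _ n n _ n _ n])
  moreover have "0 \<le> v \<bullet> ((B * S * B) *\<^sub>v v)" if v: "v \<in> carrier_vec n" for v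
  proof -
    have "v \<bullet> ((B * S * B) *\<^sub>v v) = v \<bullet> (B *\<^sub>v (S *\<^sub>v (B *\<^sub>v v)))"
      using B Sc v by (simp add: assoc_mult_mat_vec[of _ n n _ n])
    also have "\<dots> = (transpose_mat B *\<^sub>v v) \<bullet> (S *\<^sub>v (B *\<^sub>v v))"
      using B Sc v by (intro transpose_vec_mult_scalar[symmetric]) auto
    finally show ?thesis using B v Spos[of "B *\<^sub>v v"] by simp
  qed
  ultimately show ?thesis using B Sc unfolding psd_mat_def by auto
qed

lemma psd_mat_SigA:
  assumes "psd_mat n A" and "psd_mat n S"
  shows "psd_mat n (SigA A S)"
proof -
  have "mat_sqrt A \<in> carrier_mat n n" "transpose_mat (mat_sqrt A) = mat_sqrt A"
    using psd_mat_sqrt[OF assms(1)] unfolding psd_mat_def by auto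
  thus ?thesis unfolding SigA_def using psd_mat_congruence assms(2) by blast
qed

lemma mat_trace_mult:
  fixes X Y :: "real mat"
  assumes X: "X \<in> carrier_mat n n" and Y: "Y \<in> carrier_mat n n"
  shows "mat_trace (X * Y) = (\<Sum>i<n. \<Sum>k<n. X $$ (i, k) * Y $$ (k, i))"
proof -
  have "dim_row (X * Y) = n" using X by simp
  thus ?thesis
    unfolding mat_trace_def
    by (intro sum.cong) (auto simp: index_mult_mat_sum[OF X Y] simp del: index_mult_mat(1))
qed

lemma mat_trace_mult_comm:
  fixes X Y :: "real mat"
  assumes X: "X \<in> carrier_mat n n" and Y: "Y \<in> carrier_mat n n"
  shows "mat_trace (X * Y) = mat_trace (Y * X)"
  unfolding mat_trace_mult[OF X Y] mat_trace_mult[OF Y X]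
  by (subst sum.swap) (simp add: mult.commute)

text \<open>With \<open>P = R\<^sup>2\<close>, \<open>tr(PQ) = tr(RQR) = \<Sum>\<^sub>i r\<^sub>i\<^sup>T Q r\<^sub>i\<close> over the columns \<open>r\<^sub>i\<close> of \<open>R\<close>.\<close>
lemma mat_trace_psd_mult_nonneg:
  assumes P: "psd_mat n P" and Q: "psd_mat n Q"
  shows "0 \<le> mat_trace (P * Q)"
proof -
  obtain R where R: "psd_mat n R" "R * R = P" using psd_mat_sqrt_exists[OF P] by blast
  have Rc: "R \<in> carrier_mat n n" and symR: "transpose_mat R = R" using R unfolding psd_mat_def by auto
  have Qc: "Q \<in> carrier_mat n n" and Qpos: "\<And>v. v \<in> carrier_vec n \<Longrightarrow> 0 \<le> v \<bullet> (Q *\<^sub>v v)"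
    using Q unfolding psd_mat_def by auto
  have "mat_trace (P * Q) = mat_trace (R * (R * Q))"
    unfolding R(2)[symmetric] by (subst assoc_mult_mat[OF Rc Rc Qc]) (rule refl)
  also have "\<dots> = mat_trace (R * (Q * R))"
    using Rc Qc mat_trace_mult_comm[of R n "R * Q"] by (simp add: assoc_mult_mat[of _ n n _ n _ n])
  also have "\<dots> = (\<Sum>i<n. col R i \<bullet> (Q *\<^sub>v col R i))"
    unfolding mat_trace_def using Rc Qc
    by (intro sum.cong) (auto simp: col_transpose[of _ R, symmetric] symR mult_mat_vec_def)
  also have "\<dots> \<ge> 0" using Qpos Rc by (intro sum_nonneg) auto
  finally show ?thesis .
qed

section \<open>Bounds on \<open>K\<^sub>1\<close> and \<open>K\<^sub>2\<close>\<close>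

lemma K1_lower_bound:
  assumes A: "psd_mat p A" and S1: "psd_mat p S1" and S2: "psd_mat p S2"
    and n1: "2 \<le> n1" and n2: "2 \<le> n2"
  shows "2 * mat_trace (SigA A S1 * SigA A S1) / (real n1)\<^sup>2 \<le> K1 A S1 S2 n1 n2"
    and "2 * mat_trace (SigA A S2 * SigA A S2) / (real n2)\<^sup>2 \<le> K1 A S1 S2 n1 n2"
proof -
  let ?a = "mat_trace (SigA A S1 * SigA A S1)" and ?b = "mat_trace (SigA A S2 * SigA A S2)"
    and ?c = "mat_trace (SigA A S1 * SigA A S2)"
  have a: "0 \<le> ?a" and b: "0 \<le> ?b" and c: "0 \<le> ?c"
    using psd_mat_SigA[OF A S1] psd_mat_SigA[OF A S2] by (auto intro: mat_trace_psd_mult_nonneg)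
  have le: "t / (real n)\<^sup>2 \<le> t / (real n * (real n - 1))" if "0 \<le> t" "2 \<le> n" for t n
    using that by (intro divide_left_mono) (auto simp: power2_eq_square)
  have nonneg: "0 \<le> t / (real n * (real n - 1))" if "0 \<le> t" "2 \<le> n" for t n
    using that by simp
  have K1: "K1 A S1 S2 n1 n2
      = 2 * (?a / (real n1 * (real n1 - 1)) + ?b / (real n2 * (real n2 - 1)))
        + 4 * (?c / (real n1 * real n2))"
    unfolding K1_def by simp
  have c': "0 \<le> 4 * (?c / (real n1 * real n2))" using c by simp
  have sum_bound: "2 * x \<le> 2 * (X + Y) + Z \<and> 2 * y \<le> 2 * (X + Y) + Z"
    if "x \<le> X" "y \<le> Y" "0 \<le> X" "0 \<le> Y" "0 \<le> Z" for x y X Y Z :: real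
    using that by simp
  have "2 * (?a / (real n1)\<^sup>2) \<le> K1 A S1 S2 n1 n2 \<and> 2 * (?b / (real n2)\<^sup>2) \<le> K1 A S1 S2 n1 n2"
    unfolding K1 by (rule sum_bound[OF le[OF a n1] le[OF b n2] nonneg[OF a n1] nonneg[OF b n2] c'])
  thus "2 * ?a / (real n1)\<^sup>2 \<le> K1 A S1 S2 n1 n2" "2 * ?b / (real n2)\<^sup>2 \<le> K1 A S1 S2 n1 n2"
    by simp_all
qed

lemma quadratic_form_SigA_bounds:
  assumes A: "psd_mat p A" and S: "psd_mat p S"
    and mu1: "mu1 \<in> carrier_vec p" and mu2: "mu2 \<in> carrier_vec p"
  shows "0 \<le> muA A mu1 mu2 \<bullet> (SigA A S *\<^sub>v muA A mu1 mu2)"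
    and "muA A mu1 mu2 \<bullet> (SigA A S *\<^sub>v muA A mu1 mu2) \<le> lambda_max (SigA A S) * Delta A mu1 mu2"
proof -
  have mu: "muA A mu1 mu2 \<in> carrier_vec p"
    using psd_mat_sqrt[OF A] mu1 mu2 unfolding muA_def psd_mat_def by auto
  have "psd_mat p (SigA A S)" by (rule psd_mat_SigA[OF A S])
  thus "0 \<le> muA A mu1 mu2 \<bullet> (SigA A S *\<^sub>v muA A mu1 mu2)"
    and "muA A mu1 mu2 \<bullet> (SigA A S *\<^sub>v muA A mu1 mu2) \<le> lambda_max (SigA A S) * Delta A mu1 mu2"
    unfolding psd_mat_def Delta_def using mu rayleigh_le_lambda_max by auto
qed

lemma scaled_square_le:
  fixes q l D t N K :: real
  assumes "0 \<le> q" "q \<le> l * D" "0 < t" "2 * t / N\<^sup>2 \<le> K"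
  shows "(q / N)\<^sup>2 \<le> l\<^sup>2 / t * D\<^sup>2 * (K / 2)"
proof -
  have "(q / N)\<^sup>2 \<le> (l * D)\<^sup>2 / N\<^sup>2"
    using assms by (simp add: power_divide divide_right_mono power_mono)
  also have "\<dots> = l\<^sup>2 / t * D\<^sup>2 * (t / N\<^sup>2)" using assms by (simp add: power_mult_distrib)
  also have "\<dots> \<le> l\<^sup>2 / t * D\<^sup>2 * (K / 2)"
  proof (rule mult_left_mono)
    have "2 * (t / N\<^sup>2) \<le> K" using assms(4) by simp
    thus "t / N\<^sup>2 \<le> K / 2" by linarith
  qed (use assms in auto)
  finally show ?thesis .
qed

lemma K2_div_K1_bounds:
  assumes A: "psd_mat p A" and S1: "psd_mat p S1" and S2: "psd_mat p S2"
    and mu1: "mu1 \<in> carrier_vec p" and mu2: "mu2 \<in> carrier_vec p"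
    and n1: "2 \<le> n1" and n2: "2 \<le> n2"
    and tr1: "0 < mat_trace (SigA A S1 * SigA A S1)"
    and tr2: "0 < mat_trace (SigA A S2 * SigA A S2)"
  defines "k1 \<equiv> K1 A S1 S2 n1 n2" and "k2 \<equiv> K2 A S1 S2 mu1 mu2 n1 n2"
  shows "0 < k1" and "0 \<le> k2"
    and "(k2 / k1)\<^sup>2 \<le> 16 * ((lambda_max (SigA A S1))\<^sup>2 / mat_trace (SigA A S1 * SigA A S1)
                          + (lambda_max (SigA A S2))\<^sup>2 / mat_trace (SigA A S2 * SigA A S2))
                       * ((Delta A mu1 mu2)\<^sup>2 / k1)"
proof -
  let ?q1 = "muA A mu1 mu2 \<bullet> (SigA A S1 *\<^sub>v muA A mu1 mu2)"
  let ?q2 = "muA A mu1 mu2 \<bullet> (SigA A S2 *\<^sub>v muA A mu1 mu2)"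
  let ?D = "Delta A mu1 mu2"
  let ?r = "(lambda_max (SigA A S1))\<^sup>2 / mat_trace (SigA A S1 * SigA A S1)
          + (lambda_max (SigA A S2))\<^sup>2 / mat_trace (SigA A S2 * SigA A S2)"
  note lb = K1_lower_bound[OF A S1 S2 n1 n2, folded k1_def]
  note q1 = quadratic_form_SigA_bounds[OF A S1 mu1 mu2]
  note q2 = quadratic_form_SigA_bounds[OF A S2 mu1 mu2]
  have "0 < 2 * mat_trace (SigA A S1 * SigA A S1) / (real n1)\<^sup>2" using tr1 n1 by simp
  thus k1: "0 < k1" using lb(1) by linarith
  have k2: "k2 = 4 * (?q1 / n1 + ?q2 / n2)" unfolding k2_def K2_def ..
  show "0 \<le> k2" unfolding k2 using q1(1) q2(1) by simp
  have "(4 * (x + y))\<^sup>2 \<le> 32 * (x\<^sup>2 + y\<^sup>2)" for x y :: real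
  proof -
    have "0 \<le> (x - y)\<^sup>2" by simp
    thus ?thesis by (simp add: power2_eq_square algebra_simps)
  qed
  hence "k2\<^sup>2 \<le> 32 * ((?q1 / n1)\<^sup>2 + (?q2 / n2)\<^sup>2)" unfolding k2 .
  also have "\<dots> \<le> 32 * ((lambda_max (SigA A S1))\<^sup>2 / mat_trace (SigA A S1 * SigA A S1) * ?D\<^sup>2 * (k1 / 2)
      + (lambda_max (SigA A S2))\<^sup>2 / mat_trace (SigA A S2 * SigA A S2) * ?D\<^sup>2 * (k1 / 2))"
    by (rule mult_left_mono[OF add_mono[OF scaled_square_le[OF q1 tr1 lb(1)]
          scaled_square_le[OF q2 tr2 lb(2)]]]) simp
  also have "\<dots> = 16 * ?r * ?D\<^sup>2 * k1" by (simp add: algebra_simps)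
  finally have "k2\<^sup>2 \<le> 16 * ?r * ?D\<^sup>2 * k1" .
  hence "k2\<^sup>2 / k1\<^sup>2 \<le> 16 * ?r * ?D\<^sup>2 * k1 / k1\<^sup>2"
    using k1 by (intro divide_right_mono) auto
  thus "(k2 / k1)\<^sup>2 \<le> 16 * ?r * (?D\<^sup>2 / k1)"
    using k1 by (simp add: power_divide power2_eq_square)
qed

section \<open>The asymptotic statement\<close>

lemma tendsto_zero_if_square_le_vanishing_times_bounded:
  fixes g r h :: "nat \<Rightarrow> real"
  assumes sq: "\<And>k. (g k)\<^sup>2 \<le> r k * h k" and r_nonneg: "\<And>k. 0 \<le> r k"
    and r: "r \<longlonglongrightarrow> 0" and h: "limsup (\<lambda>k. ereal (h k)) < \<infinity>"
  shows "g \<longlonglongrightarrow> 0"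
proof -
  have "limsup (\<lambda>k. ereal (h k)) \<noteq> \<infinity>" using h by simp
  then obtain N :: nat where "limsup (\<lambda>k. ereal (h k)) < ereal (real N)"
    unfolding less_PInf_Ex_of_nat by blast
  hence "eventually (\<lambda>k. ereal (h k) < ereal (real N)) sequentially"
    by (rule Limsup_lessD)
  hence upper: "eventually (\<lambda>k. (g k)\<^sup>2 \<le> r k * real N) sequentially"
  proof eventually_elim
    case (elim k)
    have "r k * h k \<le> r k * real N" using elim r_nonneg[of k] by (intro mult_left_mono) auto
    thus ?case using sq[of k] by (rule order_trans[rotated])
  qed
  have lim: "(\<lambda>k. r k * real N) \<longlonglongrightarrow> 0"
    using tendsto_mult[OF r tendsto_const, of "real N"] by simp
  have "eventually (\<lambda>k. 0 \<le> (g k)\<^sup>2) sequentially" by simp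
  from tendsto_sandwich[OF this upper tendsto_const lim]
  show ?thesis by simp
qed

theorem lemma1:
  fixes p n1 n2 :: "nat \<Rightarrow> nat"
    and A S1 S2 :: "nat \<Rightarrow> real mat"
    and mu1 mu2 :: "nat \<Rightarrow> real vec"
  assumes psdA: "\<And>k. psd_mat (p k) (A k)"
    and pd1: "\<And>k. pd_mat (p k) (S1 k)"
    and pd2: "\<And>k. pd_mat (p k) (S2 k)"
    and mu1: "\<And>k. mu1 k \<in> carrier_vec (p k)"
    and mu2: "\<And>k. mu2 k \<in> carrier_vec (p k)"
    and n1: "\<And>k. n1 k \<ge> 4"
    and n2: "\<And>k. n2 k \<ge> 4"
    and m_lim: "filterlim (\<lambda>k. min (p k) (min (n1 k) (n2 k))) at_top sequentially"
    and tr1_pos: "\<And>k. mat_trace (SigA (A k) (S1 k) * SigA (A k) (S1 k)) > 0"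
    and tr2_pos: "\<And>k. mat_trace (SigA (A k) (S2 k) * SigA (A k) (S2 k)) > 0"
    and lam1: "(\<lambda>k. (lambda_max (SigA (A k) (S1 k)))\<^sup>2
                   / mat_trace (SigA (A k) (S1 k) * SigA (A k) (S1 k))) \<longlonglongrightarrow> 0"
    and lam2: "(\<lambda>k. (lambda_max (SigA (A k) (S2 k)))\<^sup>2
                   / mat_trace (SigA (A k) (S2 k) * SigA (A k) (S2 k))) \<longlonglongrightarrow> 0"
    and limsup_fin: "limsup (\<lambda>k. ereal ((Delta (A k) (mu1 k) (mu2 k))\<^sup>2
                   / K1 (A k) (S1 k) (S2 k) (n1 k) (n2 k))) < \<infinity>"
  shows "(\<lambda>k. KK (A k) (S1 k) (S2 k) (mu1 k) (mu2 k) (n1 k) (n2 k)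
              / K1 (A k) (S1 k) (S2 k) (n1 k) (n2 k)) \<longlonglongrightarrow> 1"
proof -
  define k1 where "k1 k = K1 (A k) (S1 k) (S2 k) (n1 k) (n2 k)" for k
  define k2 where "k2 k = K2 (A k) (S1 k) (S2 k) (mu1 k) (mu2 k) (n1 k) (n2 k)" for k
  define r where "r k = 16 * ((lambda_max (SigA (A k) (S1 k)))\<^sup>2 / mat_trace (SigA (A k) (S1 k) * SigA (A k) (S1 k))
      + (lambda_max (SigA (A k) (S2 k)))\<^sup>2 / mat_trace (SigA (A k) (S2 k) * SigA (A k) (S2 k)))" for k
  have bounds: "0 < k1 k" "0 \<le> r k"
    "(k2 k / k1 k)\<^sup>2 \<le> r k * ((Delta (A k) (mu1 k) (mu2 k))\<^sup>2 / k1 k)" for k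
  proof -
    have "2 \<le> n1 k" "2 \<le> n2 k" using n1[of k] n2[of k] by auto
    note b = K2_div_K1_bounds[OF psdA[of k] pd_imp_psd[OF pd1[of k]] pd_imp_psd[OF pd2[of k]]
        mu1[of k] mu2[of k] this tr1_pos[of k] tr2_pos[of k]]
    show "0 < k1 k" unfolding k1_def by (rule b(1))
    show "(k2 k / k1 k)\<^sup>2 \<le> r k * ((Delta (A k) (mu1 k) (mu2 k))\<^sup>2 / k1 k)"
      unfolding k1_def k2_def r_def by (rule b(3))
    show "0 \<le> r k" unfolding r_def using tr1_pos[of k] tr2_pos[of k] by simp
  qed
  have "(\<lambda>k. k2 k / k1 k) \<longlonglongrightarrow> 0"
  proof (rule tendsto_zero_if_square_le_vanishing_times_bounded[OF bounds(3) bounds(2)])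
    show "r \<longlonglongrightarrow> 0"
      unfolding r_def using tendsto_mult[OF tendsto_const tendsto_add[OF lam1 lam2], of 16] by simp
  qed (use limsup_fin in \<open>simp add: k1_def\<close>)
  hence "(\<lambda>k. 1 + k2 k / k1 k) \<longlonglongrightarrow> 1 + 0" by (intro tendsto_add tendsto_const)
  moreover have "KK (A k) (S1 k) (S2 k) (mu1 k) (mu2 k) (n1 k) (n2 k) / k1 k = 1 + k2 k / k1 k" for k
    using bounds(1)[of k] by (simp add: KK_def k1_def k2_def add_divide_distrib)
  ultimately show ?thesis by (simp add: k1_def)
qed

end
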